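(* Let $N$ be a smooth compact connected manifold, Riemannian-embedded in a matrix algebra $\mathcal M$ (with $0\in N$). Then the space $L^2(S^1,N)$ is contractible.
   Context: $\mathcal M$ is an algebra of complex matrices with Hermitian product $(A,B)\mapsto \mathrm{tr}(AB^* )$, $S^1=\mathbb R/\mathbb Z$. $L^2(S^1,N)$ is the closure of $C^\infty(S^1,N)$ in $L^2(S^1,\mathcal M)$, with the topology of the $L^2$-norm. *)

theory Defs
  imports "HOL-Analysis.Analysis"
begin

(* C^k maps on a set S (intended: S open), via Frechet derivatives:
   C^(k+1) iff differentiable at every point of S with every directional
   component x \<mapsto> f' x v of the derivative of class C^k. *)
fun Ck_on :: "nat \<Rightarrow> 'a::real_normed_vector set \<Rightarrow> ('a \<Rightarrow> 'b::real_normed_vector) \<Rightarrow> bool" where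
  "Ck_on 0 S f = continuous_on S f"
| "Ck_on (Suc k) S f =
     (\<exists>f'. (\<forall>x\<in>S. (f has_derivative f' x) (at x)) \<and> (\<forall>v. Ck_on k S (\<lambda>x. f' x v)))"

definition smooth_on :: "'a::real_normed_vector set \<Rightarrow> ('a \<Rightarrow> 'b::real_normed_vector) \<Rightarrow> bool" where
  "smooth_on S f \<longleftrightarrow> (\<forall>k. Ck_on k S f)"

definition smooth_submanifold :: "'a::euclidean_space set \<Rightarrow> bool" where
  "smooth_submanifold N \<longleftrightarrow>
     (\<forall>p\<in>N. \<exists>U W (\<phi>::'a \<Rightarrow> 'a) \<psi> L.
        open U \<and> p \<in> U \<and> open W \<and> subspace L \<and>
        smooth_on U \<phi> \<and> smooth_on W \<psi> \<and> \<phi> ` U = W \<and>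
        (\<forall>x\<in>U. \<psi> (\<phi> x) = x) \<and> (\<forall>y\<in>W. \<phi> (\<psi> y) = y) \<and>
        \<phi> ` (N \<inter> U) = W \<inter> L)"

(* S^1 = R/Z; functions on S^1 are represented on the fundamental domain [0,1] *)
definition L2_loops :: "(real \<Rightarrow> 'a::euclidean_space) set" where
  "L2_loops = {f. f \<in> borel_measurable (lebesgue_on {0..1}) \<and>
                  integrable (lebesgue_on {0..1}) (\<lambda>t. (norm (f t))\<^sup>2)}"

definition L2_dist :: "(real \<Rightarrow> 'a::euclidean_space) \<Rightarrow> (real \<Rightarrow> 'a) \<Rightarrow> real" where
  "L2_dist f g = sqrt (integral\<^sup>L (lebesgue_on {0..1}) (\<lambda>t. (norm (f t - g t))\<^sup>2))"

(* C^\<infinity>(S^1, N): smooth 1-periodic maps R \<Rightarrow> M with values in N *)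
definition smooth_loops :: "'a::euclidean_space set \<Rightarrow> (real \<Rightarrow> 'a) set" where
  "smooth_loops N = {\<gamma>. smooth_on UNIV \<gamma> \<and> (\<forall>t. \<gamma> (t + 1) = \<gamma> t) \<and> (\<forall>t. \<gamma> t \<in> N)}"

(* L^2(S^1,N): L^2-closure of C^\<infinity>(S^1,N) in L^2(S^1,M) *)
definition L2_loops_in :: "'a::euclidean_space set \<Rightarrow> (real \<Rightarrow> 'a) set" where
  "L2_loops_in N = {f \<in> L2_loops. \<forall>e>0. \<exists>\<gamma>\<in>smooth_loops N. L2_dist f \<gamma> < e}"

definition pmetric_topology :: "'b set \<Rightarrow> ('b \<Rightarrow> 'b \<Rightarrow> real) \<Rightarrow> 'b topology" where
  "pmetric_topology X d =
     topology (\<lambda>U. U \<subseteq> X \<and> (\<forall>x\<in>U. \<exists>e>0. \<forall>y\<in>X. d x y < e \<longrightarrow> y \<in> U))"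


end

theory Submission
  imports Defs
begin

text \<open>
  Truncating a loop at time \<open>1 - s\<close>, i.e.\ replacing it by \<open>0\<close> on \<open>(1 - s, 1]\<close>, defines a homotopy
  from the identity to the constant loop \<open>0\<close>; it is continuous for the \<open>L\<^sup>2\<close> distance by absolute
  continuity of the integral. The substance is that truncations stay in the closure of the smooth
  loops in \<open>N\<close>. A smooth loop \<open>\<gamma>\<close> truncated at \<open>a\<close> is \<open>L\<^sup>2\<close>-close to the smooth loop that runs
  through \<open>\<gamma>\<close> (slowed down to be constant near \<open>0\<close> and \<open>a\<close>), then along a smooth path in \<open>N\<close>
  from \<open>\<gamma> 0\<close> to \<open>0\<close>, rests at \<open>0\<close>, and returns along the same path: the two differ only on
  three short intervals, and \<open>N\<close> is bounded. Such paths exist because \<open>N\<close> is connected and, in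
  a submanifold chart, straight segments between nearby points stay in \<open>N\<close>.
\<close>

section \<open>Calculus of \<open>C\<^sup>k\<close> and smooth maps\<close>

lemma Ck_on_SucI:
  "(\<And>x. x \<in> S \<Longrightarrow> (f has_derivative f' x) (at x)) \<Longrightarrow> (\<And>v. Ck_on k S (\<lambda>x. f' x v)) \<Longrightarrow> Ck_on (Suc k) S f"
  by auto

lemma Ck_on_SucD: "Ck_on (Suc k) S f \<Longrightarrow> Ck_on k S f"
proof (induction k arbitrary: f)
  case 0
  then obtain f' where "\<forall>x\<in>S. (f has_derivative f' x) (at x)" by auto
  then show ?case
    by (auto intro!: continuous_at_imp_continuous_on has_derivative_continuous)
next
  case (Suc k)
  then obtain f' where "\<forall>x\<in>S. (f has_derivative f' x) (at x)" "\<forall>v. Ck_on (Suc k) S (\<lambda>x. f' x v)"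
    by auto
  then show ?case using Suc.IH by auto
qed

lemma Ck_on_subset: "Ck_on k S f \<Longrightarrow> T \<subseteq> S \<Longrightarrow> Ck_on k T f"
proof (induction k arbitrary: f)
  case 0 then show ?case by (auto intro: continuous_on_subset)
next
  case (Suc k) then show ?case by (simp, meson subsetD)
qed

lemma Ck_on_const: "Ck_on k S (\<lambda>x. c)"
  by (induction k arbitrary: c) (auto intro!: exI[of _ "\<lambda>x v. 0"])

lemma Ck_on_ident: "Ck_on k S (\<lambda>x. x)"
  by (cases k) (auto intro!: exI[of _ "\<lambda>x v. v"] Ck_on_const)

lemma Ck_on_add: "Ck_on k S f \<Longrightarrow> Ck_on k S g \<Longrightarrow> Ck_on k S (\<lambda>x. f x + g x)"
proof (induction k arbitrary: f g)
  case 0 then show ?case by (auto intro: continuous_on_add)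
next
  case (Suc k)
  from Suc.prems obtain f' g' where
    f: "\<forall>x\<in>S. (f has_derivative f' x) (at x)" "\<forall>v. Ck_on k S (\<lambda>x. f' x v)" and
    g: "\<forall>x\<in>S. (g has_derivative g' x) (at x)" "\<forall>v. Ck_on k S (\<lambda>x. g' x v)" by auto
  show ?case
    by (auto intro!: exI[of _ "\<lambda>x v. f' x v + g' x v"] has_derivative_add Suc.IH f[rule_format] g[rule_format])
qed

lemma Ck_on_sum:
  "finite I \<Longrightarrow> (\<And>i. i \<in> I \<Longrightarrow> Ck_on k S (f i)) \<Longrightarrow> Ck_on k S (\<lambda>x. \<Sum>i\<in>I. f i x)"
  by (induction I rule: finite_induct) (auto intro: Ck_on_const Ck_on_add)

lemma Ck_on_bounded_linear: "bounded_linear L \<Longrightarrow> Ck_on k S f \<Longrightarrow> Ck_on k S (\<lambda>x. L (f x))"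
proof (induction k arbitrary: f)
  case 0 then show ?case
    by (auto intro: continuous_on_compose2[OF linear_continuous_on[OF 0(1)]])
next
  case (Suc k)
  from Suc.prems obtain f' where
    f: "\<forall>x\<in>S. (f has_derivative f' x) (at x)" "\<forall>v. Ck_on k S (\<lambda>x. f' x v)" by auto
  show ?case
    by (auto intro!: exI[of _ "\<lambda>x v. L (f' x v)"] Suc.IH f[rule_format]
        bounded_linear.has_derivative[OF Suc.prems(1)] Suc.prems(1))
qed

lemma Ck_on_scaleR:
  "Ck_on k S (a :: _ \<Rightarrow> real) \<Longrightarrow> Ck_on k S F \<Longrightarrow> Ck_on k S (\<lambda>x. a x *\<^sub>R F x)"
proof (induction k arbitrary: a F)
  case 0 then show ?case by (auto intro: continuous_on_scaleR)
next
  case (Suc k)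
  from Suc.prems obtain a' F' where
    a: "\<forall>x\<in>S. (a has_derivative a' x) (at x)" "\<forall>v. Ck_on k S (\<lambda>x. a' x v)" and
    F: "\<forall>x\<in>S. (F has_derivative F' x) (at x)" "\<forall>v. Ck_on k S (\<lambda>x. F' x v)" by auto
  have "Ck_on k S a" "Ck_on k S F" using Suc.prems Ck_on_SucD by blast+
  then show ?case
    by (auto intro!: exI[of _ "\<lambda>x v. a x *\<^sub>R F' x v + a' x v *\<^sub>R F x"] has_derivative_scaleR
        Ck_on_add Suc.IH a[rule_format] F[rule_format])
qed

lemma Ck_on_mult: "Ck_on k S (a :: _ \<Rightarrow> real) \<Longrightarrow> Ck_on k S b \<Longrightarrow> Ck_on k S (\<lambda>x. a x * b x)"
  using Ck_on_scaleR[of k S a b] by simp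

lemma Ck_on_inverse:
  assumes "Ck_on k S (u :: _ \<Rightarrow> real)" "\<forall>x\<in>S. u x \<noteq> 0"
  shows "Ck_on k S (\<lambda>x. inverse (u x))"
  using assms
proof (induction k)
  case 0 then show ?case by (auto intro: continuous_on_inverse)
next
  case (Suc k)
  from Suc.prems obtain u' where
    u: "\<forall>x\<in>S. (u has_derivative u' x) (at x)" "\<forall>v. Ck_on k S (\<lambda>x. u' x v)" by auto
  have "Ck_on k S (\<lambda>x. inverse (u x))" using Suc Ck_on_SucD by blast
  then have "Ck_on k S (\<lambda>x. - (inverse (u x) * u' x v * inverse (u x)))" for v
    using Ck_on_bounded_linear[OF bounded_linear_minus[OF bounded_linear_ident]]
    by (blast intro: Ck_on_mult u(2)[rule_format])
  moreover have "((\<lambda>x. inverse (u x)) has_derivative (\<lambda>v. - (inverse (u x) * u' x v * inverse (u x)))) (at x)"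
    if "x \<in> S" for x
    using Deriv.has_derivative_inverse[of u x "u' x" UNIV] Suc.prems(2) u(1) that by blast
  ultimately show ?case by (rule Ck_on_SucI[rotated])
qed

lemma Ck_on_cong:
  assumes "open S" "\<And>x. x \<in> S \<Longrightarrow> f x = g x" "Ck_on k S f"
  shows "Ck_on k S g"
proof (cases k)
  case 0
  then show ?thesis using assms(2,3) continuous_on_cong[OF refl, of S f g] by simp
next
  case (Suc m)
  from assms(3) obtain f' where
    f: "\<forall>x\<in>S. (f has_derivative f' x) (at x)" "\<forall>v. Ck_on m S (\<lambda>x. f' x v)" by (auto simp: Suc)
  have "(g has_derivative f' x) (at x)" if "x \<in> S" for x
    by (rule has_derivative_transform_within_open[OF f(1)[rule_format, OF that] assms(1) that assms(2)])
  then show ?thesis unfolding Suc using f(2) by auto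
qed

lemma Ck_on_local:
  assumes "\<And>x. x \<in> S \<Longrightarrow> \<exists>V. open V \<and> x \<in> V \<and> Ck_on k V f"
  shows "Ck_on k S f"
  using assms
proof (induction k arbitrary: f)
  case 0
  have "isCont f x" if "x \<in> S" for x
    using 0[OF that] continuous_on_eq_continuous_at by auto
  then show ?case by (simp add: continuous_at_imp_continuous_on)
next
  case (Suc k)
  have D: "\<exists>V f'. open V \<and> x \<in> V \<and> (\<forall>y\<in>V. (f has_derivative f' y) (at y)) \<and> (\<forall>v. Ck_on k V (\<lambda>y. f' y v))"
    if "x \<in> S" for x using Suc.prems[OF that] by auto
  have "(f has_derivative frechet_derivative f (at x)) (at x)" if "x \<in> S" for x
    using D[OF that] frechet_derivative_works differentiableI by blast
  moreover have "Ck_on k S (\<lambda>x. frechet_derivative f (at x) v)" for v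
  proof (rule Suc.IH)
    fix x assume "x \<in> S"
    then obtain V f' where V: "open V" "x \<in> V" "\<forall>y\<in>V. (f has_derivative f' y) (at y)"
      "\<forall>v. Ck_on k V (\<lambda>y. f' y v)"
      using D by blast
    have "Ck_on k V (\<lambda>y. frechet_derivative f (at y) v)"
      by (rule Ck_on_cong[OF V(1) _ V(4)[rule_format, of v]])
        (use V(3) frechet_derivative_at in metis)
    then show "\<exists>V. open V \<and> x \<in> V \<and> Ck_on k V (\<lambda>x. frechet_derivative f (at x) v)" using V by blast
  qed
  ultimately show ?case by (rule Ck_on_SucI)
qed

text \<open>The derivative of \<open>g \<circ> c\<close> is expanded in a basis, so that the \<open>C\<^sup>k\<close> hypothesis on the
  directional derivatives of \<open>g\<close> applies to each term.\<close>
lemma Ck_on_compose: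
  fixes g :: "'b::euclidean_space \<Rightarrow> 'c::real_normed_vector" and c :: "'a::real_normed_vector \<Rightarrow> 'b"
  assumes "Ck_on k W g" "Ck_on k T c" "c ` T \<subseteq> W"
  shows "Ck_on k T (\<lambda>x. g (c x))"
  using assms
proof (induction k arbitrary: g c)
  case 0
  then show ?case using continuous_on_compose2 by auto
next
  case (Suc k)
  from Suc.prems obtain g' where
    g: "\<forall>x\<in>W. (g has_derivative g' x) (at x)" "\<forall>v. Ck_on k W (\<lambda>x. g' x v)" by auto
  from Suc.prems obtain c' where
    c: "\<forall>x\<in>T. (c has_derivative c' x) (at x)" "\<forall>v. Ck_on k T (\<lambda>x. c' x v)" by auto
  have c0: "Ck_on k T c" using Suc.prems Ck_on_SucD by blast
  define D where "D x v = (\<Sum>i\<in>Basis. (c' x v \<bullet> i) *\<^sub>R g' (c x) i)" for x v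
  have "((\<lambda>x. g (c x)) has_derivative D x) (at x)" if "x \<in> T" for x
  proof -
    have cx: "c x \<in> W" using that Suc.prems(3) by blast
    have L: "linear (g' (c x))" using g(1) cx has_derivative_linear by blast
    have "g' (c x) (c' x v) = D x v" for v
      unfolding D_def by (subst euclidean_representation[symmetric, of "c' x v"])
        (simp add: linear_sum[OF L] linear_scale[OF L])
    moreover have "((\<lambda>x. g (c x)) has_derivative (\<lambda>v. g' (c x) (c' x v))) (at x)"
      using has_derivative_compose[of c "c' x" x UNIV g "g' (c x)"] c(1) g(1) that cx by blast
    ultimately show ?thesis by (simp add: fun_eq_iff)
  qed
  moreover have "Ck_on k T (\<lambda>x. D x v)" for v
    unfolding D_def
  proof (intro Ck_on_sum finite_Basis Ck_on_scaleR)
    fix i :: 'b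
    show "Ck_on k T (\<lambda>x. c' x v \<bullet> i)"
      using Ck_on_bounded_linear[OF bounded_linear_inner_left c(2)[rule_format, of v]] .
    show "Ck_on k T (\<lambda>x. g' (c x) i)"
      using Suc.IH[OF g(2)[rule_format, of i] c0 Suc.prems(3)] .
  qed
  ultimately show ?case by auto
qed

lemma smooth_onD: "smooth_on S f \<Longrightarrow> Ck_on k S f"
  by (simp add: smooth_on_def)

lemma smooth_on_continuous_on: "smooth_on S f \<Longrightarrow> continuous_on S f"
  using smooth_onD[of S f 0] by simp

lemma smooth_on_const: "smooth_on S (\<lambda>x. c)"
  by (simp add: smooth_on_def Ck_on_const)

lemma smooth_on_ident: "smooth_on S (\<lambda>x. x)"
  by (simp add: smooth_on_def Ck_on_ident)

lemma smooth_on_add: "smooth_on S f \<Longrightarrow> smooth_on S g \<Longrightarrow> smooth_on S (\<lambda>x. f x + g x)"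
  by (simp add: smooth_on_def Ck_on_add)

lemma smooth_on_scaleR:
  "smooth_on S (a :: _ \<Rightarrow> real) \<Longrightarrow> smooth_on S F \<Longrightarrow> smooth_on S (\<lambda>x. a x *\<^sub>R F x)"
  by (simp add: smooth_on_def Ck_on_scaleR)

lemma smooth_on_mult:
  "smooth_on S (a :: _ \<Rightarrow> real) \<Longrightarrow> smooth_on S b \<Longrightarrow> smooth_on S (\<lambda>x. a x * b x)"
  by (simp add: smooth_on_def Ck_on_mult)

lemma smooth_on_inverse:
  "smooth_on S (u :: _ \<Rightarrow> real) \<Longrightarrow> \<forall>x\<in>S. u x \<noteq> 0 \<Longrightarrow> smooth_on S (\<lambda>x. inverse (u x))"
  by (simp add: smooth_on_def Ck_on_inverse)

lemma smooth_on_compose: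
  fixes g :: "'b::euclidean_space \<Rightarrow> 'c::real_normed_vector"
  shows "smooth_on W g \<Longrightarrow> smooth_on T c \<Longrightarrow> c ` T \<subseteq> W \<Longrightarrow> smooth_on T (\<lambda>x. g (c x))"
  unfolding smooth_on_def by (blast intro: Ck_on_compose)

lemma smooth_on_cong: "open S \<Longrightarrow> (\<And>x. x \<in> S \<Longrightarrow> f x = g x) \<Longrightarrow> smooth_on S f \<Longrightarrow> smooth_on S g"
  unfolding smooth_on_def by (metis Ck_on_cong)

lemma smooth_on_subset: "smooth_on S f \<Longrightarrow> T \<subseteq> S \<Longrightarrow> smooth_on T f"
  unfolding smooth_on_def using Ck_on_subset by blast

lemma smooth_on_local:
  assumes "\<And>x. x \<in> S \<Longrightarrow> \<exists>V. open V \<and> x \<in> V \<and> smooth_on V f"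
  shows "smooth_on S f"
  unfolding smooth_on_def using assms by (metis Ck_on_local smooth_onD)

lemma smooth_on_affine: "smooth_on S (\<lambda>t::real. a * t + b)"
  by (intro smooth_on_add smooth_on_mult smooth_on_const smooth_on_ident)

lemma smooth_on_compose_affine:
  "smooth_on UNIV c \<Longrightarrow> smooth_on S (\<lambda>t::real. c (a * t + b))"
  by (erule smooth_on_compose[OF _ smooth_on_affine]) simp

section \<open>A smooth step function\<close>

definition flat_exp :: "nat \<Rightarrow> real \<Rightarrow> real" where
  "flat_exp n t = (if t > 0 then inverse t ^ n * exp (- inverse t) else 0)"

lemma flat_exp_nonpos [simp]: "t \<le> 0 \<Longrightarrow> flat_exp n t = 0"
  by (simp add: flat_exp_def)

lemma flat_exp_pos: "t > 0 \<Longrightarrow> flat_exp n t > 0"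
  by (simp add: flat_exp_def)

lemma flat_exp_nonneg: "flat_exp n t \<ge> 0"
  by (simp add: flat_exp_def)

lemma tendsto_flat_exp_0: "(flat_exp n \<longlongrightarrow> 0) (at 0)"
proof -
  have "((\<lambda>t. inverse t ^ n / exp (inverse t)) \<longlongrightarrow> (0::real)) (at_right 0)"
    using filterlim_compose[OF tendsto_power_div_exp_0 filterlim_inverse_at_top_right] .
  then have "(flat_exp n \<longlongrightarrow> 0) (at_right 0)"
    by (rule Lim_transform_eventually, intro eventually_mono[OF eventually_at_right_less])
      (simp add: flat_exp_def exp_minus divide_inverse)
  moreover have "(flat_exp n \<longlongrightarrow> 0) (at_left 0)"
    by (rule Lim_transform_eventually[OF tendsto_const], intro eventually_mono[OF eventually_at_left_real[of "-1" 0]])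
      auto
  ultimately show ?thesis using filterlim_at_split by blast
qed

text \<open>At \<open>0\<close> the difference quotient of \<open>flat_exp n\<close> is \<open>flat_exp (Suc n)\<close>, which tends to \<open>0\<close>.\<close>
lemma has_field_derivative_flat_exp:
  "(flat_exp n has_field_derivative (- real n * flat_exp (Suc n) t + flat_exp (Suc (Suc n)) t)) (at t)"
proof (cases t "0::real" rule: linorder_cases)
  case less
  have "((\<lambda>t. 0) has_field_derivative 0) (at t)" by simp
  then have "(flat_exp n has_field_derivative 0) (at t)"
    by (rule has_field_derivative_transform_within_open[of _ _ t "{..<0}"]) (use less in auto)
  then show ?thesis using less by simp
next
  case equal
  have "(\<lambda>y. (flat_exp n y - flat_exp n 0) / (y - 0)) = flat_exp (Suc n)"
    by (simp add: fun_eq_iff flat_exp_def divide_inverse)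
  then show ?thesis
    using tendsto_flat_exp_0[of "Suc n"] unfolding equal has_field_derivative_iff by simp
next
  case greater
  have "((\<lambda>t. inverse t ^ n * exp (- inverse t)) has_field_derivative
     (real n * inverse t ^ (n - 1) * (- inverse t * inverse t)) * exp (- inverse t)
      + inverse t ^ n * (exp (- inverse t) * (inverse t * inverse t))) (at t)"
    using greater by (auto intro!: derivative_eq_intros simp: power2_eq_square)
  moreover have "(real n * inverse t ^ (n - 1) * (- inverse t * inverse t)) * exp (- inverse t)
      + inverse t ^ n * (exp (- inverse t) * (inverse t * inverse t))
    = (- real n * inverse t ^ Suc n + inverse t ^ Suc (Suc n)) * exp (- inverse t)"
    by (cases n) (simp_all add: algebra_simps)
  moreover have "\<dots> = - real n * flat_exp (Suc n) t + flat_exp (Suc (Suc n)) t"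
    using greater by (simp add: flat_exp_def algebra_simps)
  ultimately have "((\<lambda>t. inverse t ^ n * exp (- inverse t)) has_field_derivative
      - real n * flat_exp (Suc n) t + flat_exp (Suc (Suc n)) t) (at t)"
    by simp
  then show ?thesis
    by (rule has_field_derivative_transform_within_open[of _ _ t "{0<..}"]) (use greater in \<open>auto simp: flat_exp_def\<close>)
qed

lemma Ck_on_flat_exp: "Ck_on k UNIV (flat_exp n)"
proof (induction k arbitrary: n)
  case 0
  show ?case
    by (simp, intro continuous_at_imp_continuous_on ballI DERIV_isCont[OF has_field_derivative_flat_exp])
next
  case (Suc k)
  show ?case
  proof (rule Ck_on_SucI)
    show "(flat_exp n has_derivative (\<lambda>v. (- real n * flat_exp (Suc n) t + flat_exp (Suc (Suc n)) t) * v)) (at t)" for t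
      using has_field_derivative_flat_exp[of n t] by (simp add: has_field_derivative_def)
    show "Ck_on k UNIV (\<lambda>t. (- real n * flat_exp (Suc n) t + flat_exp (Suc (Suc n)) t) * v)" for v
      by (intro Ck_on_mult Ck_on_add Ck_on_const Suc.IH)
  qed
qed

definition smooth_step :: "real \<Rightarrow> real" where
  "smooth_step t = flat_exp 0 t / (flat_exp 0 t + flat_exp 0 (1 - t))"

lemma smooth_step_denom_pos: "flat_exp 0 t + flat_exp 0 (1 - t) > 0"
  using flat_exp_pos[of t 0] flat_exp_pos[of "1 - t" 0] flat_exp_nonneg[of 0]
  by (cases "t > 0"; cases "1 - t > 0") (auto simp: add_pos_nonneg add_nonneg_pos)

lemma smooth_step_eq_0: "t \<le> 0 \<Longrightarrow> smooth_step t = 0"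
  by (simp add: smooth_step_def)

lemma smooth_step_eq_1: "t \<ge> 1 \<Longrightarrow> smooth_step t = 1"
  using smooth_step_denom_pos[of t] by (simp add: smooth_step_def)

lemma smooth_step_bounds: "0 \<le> smooth_step t" "smooth_step t \<le> 1"
  using smooth_step_denom_pos[of t] flat_exp_nonneg[of 0 t] flat_exp_nonneg[of 0 "1 - t"]
  by (simp_all add: smooth_step_def)

lemma smooth_on_smooth_step: "smooth_on UNIV smooth_step"
proof -
  have f: "smooth_on UNIV (flat_exp 0)" by (simp add: smooth_on_def Ck_on_flat_exp)
  have "smooth_on UNIV (\<lambda>t. flat_exp 0 ((- 1) * t + 1))" by (rule smooth_on_compose_affine[OF f])
  then have "smooth_on UNIV (\<lambda>t. flat_exp 0 t + flat_exp 0 (1 - t))"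
    using smooth_on_add[OF f] by simp
  then have "smooth_on UNIV (\<lambda>t. flat_exp 0 t * inverse (flat_exp 0 t + flat_exp 0 (1 - t)))"
    using smooth_step_denom_pos[THEN less_imp_neq] by (intro smooth_on_mult[OF f] smooth_on_inverse) auto
  then show ?thesis by (simp add: smooth_step_def[abs_def] divide_inverse)
qed

lemma smooth_on_if_le:
  fixes f g :: "real \<Rightarrow> 'a::real_normed_vector"
  assumes "smooth_on UNIV f" "smooth_on UNIV g" "a < b" "b < c" "\<And>t. a < t \<Longrightarrow> t < c \<Longrightarrow> f t = g t"
  shows "smooth_on UNIV (\<lambda>t. if t \<le> b then f t else g t)"
proof (rule smooth_on_local)
  fix x :: real
  have "smooth_on {..<c} (\<lambda>t. if t \<le> b then f t else g t)"
    by (rule smooth_on_cong[of _ f]) (use assms in \<open>auto intro: smooth_on_subset\<close>)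
  moreover have "smooth_on {a<..} (\<lambda>t. if t \<le> b then f t else g t)"
    by (rule smooth_on_cong[of _ g]) (use assms in \<open>auto intro: smooth_on_subset\<close>)
  moreover have "x \<in> {..<c} \<or> x \<in> {a<..}" using assms(3,4) by auto
  ultimately show "\<exists>V. open V \<and> x \<in> V \<and> smooth_on V (\<lambda>t. if t \<le> b then f t else g t)"
    by (meson open_lessThan open_greaterThan)
qed

text \<open>If \<open>E\<close> agrees with its translate by \<open>1\<close> on a left neighbourhood of \<open>0\<close>, then near
  each \<open>x\<close> the periodised map coincides with \<open>E (t - \<lfloor>x\<rfloor>)\<close>.\<close>
lemma smooth_on_frac_comp:
  fixes E :: "real \<Rightarrow> 'a::real_normed_vector"
  assumes "smooth_on UNIV E" "0 < \<epsilon>" "\<And>u. - \<epsilon> < u \<Longrightarrow> u < 0 \<Longrightarrow> E (u + 1) = E u"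
  shows "smooth_on UNIV (\<lambda>t. E (frac t))"
proof (rule smooth_on_local)
  fix x :: real
  define n where "n = real_of_int \<lfloor>x\<rfloor>"
  define V where "V = {n - min \<epsilon> 1<..<n + 1}"
  have "0 < min \<epsilon> 1" using assms(2) by simp
  have eq: "E (frac t) = E (t - n)" if "t \<in> V" for t
  proof (cases "n \<le> t")
    case True
    then have "frac t = t - n" using that by (simp add: V_def n_def frac_def floor_eq_iff)
    then show ?thesis by simp
  next
    case False
    then have "\<lfloor>t\<rfloor> = \<lfloor>x\<rfloor> - 1" using that by (simp add: V_def n_def floor_eq_iff)
    then have "frac t = t - n + 1" by (simp add: n_def frac_def)
    then show ?thesis using assms(3)[of "t - n"] False that by (simp add: V_def)
  qed
  have "open V" by (simp add: V_def)
  then have "smooth_on V (\<lambda>t. E (frac t))"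
    by (rule smooth_on_cong[OF _ _ smooth_on_compose_affine[OF assms(1), of V 1 "- n"]]) (simp add: eq)
  moreover have "x \<in> V" using \<open>0 < min \<epsilon> 1\<close> of_int_floor_le[of x] real_of_int_floor_add_one_gt[of x]
    unfolding V_def n_def greaterThanLessThan_iff by linarith
  ultimately show "\<exists>V. open V \<and> x \<in> V \<and> smooth_on V (\<lambda>t. E (frac t))"
    using \<open>open V\<close> by blast
qed

lemma smooth_loops_frac_comp:
  assumes "smooth_on UNIV E" "\<And>u. E u \<in> N" "0 < \<epsilon>" "\<And>u. - \<epsilon> < u \<Longrightarrow> u < 0 \<Longrightarrow> E (u + 1) = E u"
  shows "(\<lambda>t. E (frac t)) \<in> smooth_loops N"
  using smooth_on_frac_comp[OF assms(1,3,4)] assms(2) by (simp add: smooth_loops_def frac_1_eq)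

section \<open>Smooth paths in a submanifold\<close>

text \<open>Paths are constant near both ends, so that they can be concatenated and inserted into
  loops without losing smoothness.\<close>
definition smooth_path_in :: "'a::real_normed_vector set \<Rightarrow> 'a \<Rightarrow> 'a \<Rightarrow> (real \<Rightarrow> 'a) \<Rightarrow> bool" where
  "smooth_path_in N p q c \<longleftrightarrow>
     smooth_on UNIV c \<and> (\<forall>v. c v \<in> N) \<and> (\<forall>v\<le>0. c v = p) \<and> (\<forall>v\<ge>1. c v = q)"

lemma smooth_path_in_const: "p \<in> N \<Longrightarrow> smooth_path_in N p p (\<lambda>v. p)"
  by (simp add: smooth_path_in_def smooth_on_const)

lemma smooth_path_in_join:
  assumes c1: "smooth_path_in N p q c1" and c2: "smooth_path_in N q r c2"
  shows "smooth_path_in N p r (\<lambda>v. if v \<le> 1/2 then c1 (3 * v) else c2 (3 * v - 2))"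
proof -
  have "smooth_on UNIV (\<lambda>v. c1 (3 * v))" "smooth_on UNIV (\<lambda>v. c2 (3 * v - 2))"
    using smooth_on_compose_affine[of c1 UNIV 3 0] smooth_on_compose_affine[of c2 UNIV 3 "- 2"] c1 c2
    by (simp_all add: smooth_path_in_def)
  then have "smooth_on UNIV (\<lambda>v. if v \<le> 1/2 then c1 (3 * v) else c2 (3 * v - 2))"
    by (intro smooth_on_if_le[of _ _ "1/3" _ "2/3"]) (use c1 c2 in \<open>auto simp: smooth_path_in_def\<close>)
  then show ?thesis using c1 c2 by (auto simp: smooth_path_in_def)
qed

lemma smooth_path_in_image_segment:
  fixes \<psi> :: "'a::euclidean_space \<Rightarrow> 'b::real_normed_vector"
  assumes \<psi>: "smooth_on W \<psi>" and C: "convex C" "C \<subseteq> W" "\<psi> ` C \<subseteq> N" and uw: "u \<in> C" "w \<in> C"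
  shows "smooth_path_in N (\<psi> u) (\<psi> w) (\<lambda>v. \<psi> (u + smooth_step v *\<^sub>R (w - u)))"
proof -
  have "(1 - smooth_step v) *\<^sub>R u + smooth_step v *\<^sub>R w \<in> C" for v
    by (intro convexD_alt[OF C(1) uw] smooth_step_bounds)
  then have zC: "u + smooth_step v *\<^sub>R (w - u) \<in> C" for v by (simp add: algebra_simps)
  have "smooth_on UNIV (\<lambda>v. u + smooth_step v *\<^sub>R (w - u))"
    by (intro smooth_on_add smooth_on_scaleR smooth_on_const smooth_on_smooth_step)
  then have "smooth_on UNIV (\<lambda>v. \<psi> (u + smooth_step v *\<^sub>R (w - u)))"
    by (rule smooth_on_compose[OF \<psi>]) (use zC C(2) in blast)
  then show ?thesis
    using zC C(3) by (auto simp: smooth_path_in_def smooth_step_eq_0 smooth_step_eq_1)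
qed

text \<open>In a chart the submanifold is an open subset of a linear subspace, so points near \<open>a\<close>
  are joined by the image of a straight segment.\<close>
lemma smooth_submanifold_local_smooth_paths:
  fixes N :: "'a::euclidean_space set"
  assumes "smooth_submanifold N" "a \<in> N"
  obtains V where "open V" "a \<in> V" "\<And>x y. x \<in> N \<inter> V \<Longrightarrow> y \<in> N \<inter> V \<Longrightarrow> \<exists>c. smooth_path_in N x y c"
proof -
  obtain U W L and \<phi> \<psi> :: "'a \<Rightarrow> 'a" where chart:
    "open U \<and> a \<in> U \<and> open W \<and> subspace L \<and> smooth_on U \<phi> \<and> smooth_on W \<psi> \<and> \<phi> ` U = W \<and>
     (\<forall>x\<in>U. \<psi> (\<phi> x) = x) \<and> (\<forall>y\<in>W. \<phi> (\<psi> y) = y) \<and> \<phi> ` (N \<inter> U) = W \<inter> L"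
    using bspec[OF assms(1)[unfolded smooth_submanifold_def] assms(2)] by (elim exE) (erule that)
  then have U: "open U" "a \<in> U" and W: "open W" and L: "subspace L" and \<phi>: "smooth_on U \<phi>" and
    \<psi>: "smooth_on W \<psi>" and \<phi>U: "\<phi> ` U = W" and \<psi>\<phi>: "\<forall>x\<in>U. \<psi> (\<phi> x) = x" and
    \<phi>N: "\<phi> ` (N \<inter> U) = W \<inter> L"
    by blast+
  have "\<phi> a \<in> W" using U(2) \<phi>U by blast
  then obtain r where r: "r > 0" "ball (\<phi> a) r \<subseteq> W" using W open_contains_ball by blast
  define V where "V = \<phi> -` ball (\<phi> a) r \<inter> U"
  define C where "C = ball (\<phi> a) r \<inter> L"
  have "open V"
    using smooth_on_continuous_on[OF \<phi>] U(1) unfolding V_def continuous_on_open_vimage[OF U(1)] by simp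
  moreover have "a \<in> V" using U(2) r(1) by (simp add: V_def)
  moreover have "convex C" unfolding C_def using L by (intro convex_Int convex_ball subspace_imp_convex)
  moreover have CW: "C \<subseteq> W" using r(2) by (auto simp: C_def)
  moreover have "\<psi> ` C \<subseteq> N"
  proof -
    have "C \<subseteq> \<phi> ` (N \<inter> U)" using CW \<phi>N by (auto simp: C_def)
    then show ?thesis using \<psi>\<phi> by fastforce
  qed
  moreover have "\<phi> x \<in> C" "\<psi> (\<phi> x) = x" if "x \<in> N \<inter> V" for x
    using that \<phi>N \<psi>\<phi> by (auto simp: C_def V_def)
  ultimately show ?thesis
    using that smooth_path_in_image_segment[OF \<psi>] by metis
qed

lemma connected_smooth_submanifold_smooth_path:
  fixes N :: "'a::euclidean_space set"
  assumes "smooth_submanifold N" "connected N" "p \<in> N" "q \<in> N"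
  obtains c where "smooth_path_in N p q c"
proof -
  have "\<exists>c. smooth_path_in N p q c"
  proof (rule connected_induction_simple[OF assms(2,4,3), where P = "\<lambda>x. \<exists>c. smooth_path_in N x q c"])
    show "\<exists>c. smooth_path_in N q q c" using smooth_path_in_const[OF assms(4)] by blast
  next
    fix a assume "a \<in> N"
    then obtain V where V: "open V" "a \<in> V" "\<And>x y. x \<in> N \<inter> V \<Longrightarrow> y \<in> N \<inter> V \<Longrightarrow> \<exists>c. smooth_path_in N x y c"
      using smooth_submanifold_local_smooth_paths[OF assms(1)] by blast
    show "\<exists>T. openin (top_of_set N) T \<and> a \<in> T \<and>
      (\<forall>x\<in>T. \<forall>y\<in>T. (\<exists>c. smooth_path_in N x q c) \<longrightarrow> (\<exists>c. smooth_path_in N y q c))"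
    proof (intro exI[of _ "N \<inter> V"] conjI ballI impI)
      fix x y assume "x \<in> N \<inter> V" "y \<in> N \<inter> V" "\<exists>c. smooth_path_in N x q c"
      then obtain c1 c2 where "smooth_path_in N y x c1" "smooth_path_in N x q c2" using V(3) by blast
      then show "\<exists>c. smooth_path_in N y q c" by (blast intro: smooth_path_in_join)
    qed (use \<open>a \<in> N\<close> V in auto)
  qed
  then show ?thesis using that by blast
qed

section \<open>Truncated smooth loops\<close>

lemma smooth_ramp:
  fixes a h :: real
  assumes "0 < h" "h \<le> a"
  obtains \<beta> where "smooth_on UNIV \<beta>" "\<And>u. u \<le> h \<Longrightarrow> \<beta> u = 0"
    "\<And>u. 2 * h \<le> u \<Longrightarrow> u \<le> a \<Longrightarrow> \<beta> u = u" "\<And>u. a + h \<le> u \<Longrightarrow> \<beta> u = 1"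
proof
  define \<beta> where "\<beta> u = u * smooth_step ((1/h) * u + - 1) + (1 - u) * smooth_step ((1/h) * u + - (a/h))" for u
  show "smooth_on UNIV \<beta>"
    unfolding \<beta>_def[abs_def]
    by (intro smooth_on_add smooth_on_mult smooth_on_ident smooth_on_compose_affine[OF smooth_on_smooth_step])
      (use smooth_on_affine[of UNIV "- 1" 1] in simp)
  have step_lo: "1/h * u + - 1 \<le> 0 \<longleftrightarrow> u \<le> h" "1/h * u + - (a/h) \<le> 0 \<longleftrightarrow> u \<le> a" for u
    using assms(1) by (simp_all add: field_simps)
  have step_hi: "1/h * u + - 1 \<ge> 1 \<longleftrightarrow> 2 * h \<le> u" "1/h * u + - (a/h) \<ge> 1 \<longleftrightarrow> a + h \<le> u" for u
    using assms(1) by (simp_all add: field_simps)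
  show "\<beta> u = 0" if "u \<le> h" for u
    using that assms step_lo by (simp add: \<beta>_def smooth_step_eq_0)
  show "\<beta> u = u" if "2 * h \<le> u" "u \<le> a" for u
    using that step_lo step_hi by (simp add: \<beta>_def smooth_step_eq_0 smooth_step_eq_1)
  show "\<beta> u = 1" if "a + h \<le> u" for u
    using that assms step_hi by (simp add: \<beta>_def smooth_step_eq_1)
qed

lemma smooth_excursion:
  fixes b h :: real
  assumes c: "smooth_path_in N p q c" and h: "0 < h" "b + h < 1 - 2 * h"
  obtains \<epsilon> where "smooth_on UNIV \<epsilon>" "\<And>u. \<epsilon> u \<in> N" "\<And>u. u \<le> b \<Longrightarrow> \<epsilon> u = p"
    "\<And>u. 1 - h \<le> u \<Longrightarrow> \<epsilon> u = p" "\<And>u. b + h \<le> u \<Longrightarrow> u \<le> 1 - 2 * h \<Longrightarrow> \<epsilon> u = q"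
proof
  have cs: "smooth_on UNIV c" and cN: "\<And>v. c v \<in> N" and
    c0: "\<And>v. v \<le> 0 \<Longrightarrow> c v = p" and c1: "\<And>v. v \<ge> 1 \<Longrightarrow> c v = q"
    using c by (auto simp: smooth_path_in_def)
  define m where "m = (b + 1 - h) / 2"
  define c_out where "c_out u = c ((1/h) * u + - (b / h))" for u
  define c_in where "c_in u = c ((- 1/h) * u + (1 - h) / h)" for u
  define \<epsilon> where "\<epsilon> u = (if u \<le> m then c_out u else c_in u)" for u
  have "(1/h) * u + - (b / h) = (u - b) / h" "(- 1/h) * u + (1 - h) / h = (1 - h - u) / h" for u
    using h by (simp_all add: field_simps)
  then have out: "u \<le> b \<Longrightarrow> c_out u = p" "b + h \<le> u \<Longrightarrow> c_out u = q"
    and "in": "1 - h \<le> u \<Longrightarrow> c_in u = p" "u \<le> 1 - 2 * h \<Longrightarrow> c_in u = q" for u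
    unfolding c_out_def c_in_def using h
    by (auto intro!: c0 c1 simp: divide_nonpos_pos le_divide_eq)
  have "smooth_on UNIV c_out" "smooth_on UNIV c_in"
    unfolding c_out_def[abs_def] c_in_def[abs_def] by (rule smooth_on_compose_affine[OF cs])+
  then show "smooth_on UNIV \<epsilon>"
    unfolding \<epsilon>_def by (rule smooth_on_if_le[of _ _ "b + h" _ "1 - 2 * h"]) (use h out "in" in \<open>auto simp: m_def\<close>)
  show "\<epsilon> u \<in> N" for u using cN by (simp add: \<epsilon>_def c_out_def c_in_def)
  show "\<epsilon> u = p" if "u \<le> b" for u using that h out by (simp add: \<epsilon>_def m_def)
  show "\<epsilon> u = p" if "1 - h \<le> u" for u using that h "in" by (simp add: \<epsilon>_def m_def)
  show "\<epsilon> u = q" if "b + h \<le> u" "u \<le> 1 - 2 * h" for u using that out "in" by (simp add: \<epsilon>_def)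
qed

text \<open>Run through \<open>\<gamma>\<close>, slowed down to be constant near \<open>0\<close> and near \<open>a\<close>, then make an excursion
  to \<open>q\<close>; all junctions lie where both sides are constant.\<close>
lemma truncated_smooth_loop:
  fixes N :: "'a::euclidean_space set"
  assumes N: "smooth_submanifold N" "connected N" "q \<in> N" and \<gamma>: "\<gamma> \<in> smooth_loops N"
    and a: "0 < a" "a < 1" and h: "0 < h" "10 * h \<le> 1 - a" "4 * h \<le> a"
  obtains \<delta> where "\<delta> \<in> smooth_loops N"
    "\<And>t. t \<in> {2 * h..a} \<union> {a + 3 * h..1 - 2 * h} \<Longrightarrow> \<delta> t = (if t \<le> a then \<gamma> t else q)"
proof -
  have \<gamma>s: "smooth_on UNIV \<gamma>" and \<gamma>1: "\<gamma> 1 = \<gamma> 0" and \<gamma>N: "\<And>t. \<gamma> t \<in> N"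
    using \<gamma> by (auto simp: smooth_loops_def dest: spec[of _ 0])
  obtain c where "smooth_path_in N (\<gamma> 0) q c"
    using connected_smooth_submanifold_smooth_path[OF N(1,2) \<gamma>N N(3)] .
  then obtain \<epsilon> where \<epsilon>s: "smooth_on UNIV \<epsilon>" and \<epsilon>N: "\<And>u. \<epsilon> u \<in> N" and
    \<epsilon>0: "\<And>u. u \<le> a + 2 * h \<Longrightarrow> \<epsilon> u = \<gamma> 0" and \<epsilon>1: "\<And>u. 1 - h \<le> u \<Longrightarrow> \<epsilon> u = \<gamma> 0" and
    \<epsilon>q: "\<And>u. a + 3 * h \<le> u \<Longrightarrow> u \<le> 1 - 2 * h \<Longrightarrow> \<epsilon> u = q"
    by (rule smooth_excursion[of _ _ _ _ h "a + 2 * h"]) (use h in auto)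
  obtain \<beta> where \<beta>s: "smooth_on UNIV \<beta>" and \<beta>0: "\<And>u. u \<le> h \<Longrightarrow> \<beta> u = 0" and
    \<beta>id: "\<And>u. 2 * h \<le> u \<Longrightarrow> u \<le> a \<Longrightarrow> \<beta> u = u" and \<beta>1: "\<And>u. a + h \<le> u \<Longrightarrow> \<beta> u = 1"
    using smooth_ramp[of h a] h by auto
  define E where "E u = (if u \<le> a + 3/2 * h then \<gamma> (\<beta> u) else \<epsilon> u)" for u
  have Es: "smooth_on UNIV E"
    unfolding E_def
    by (rule smooth_on_if_le[OF smooth_on_compose[OF \<gamma>s \<beta>s subset_UNIV] \<epsilon>s, of "a + h" _ "a + 2 * h"])
      (use h \<beta>1 \<gamma>1 \<epsilon>0 in auto)
  have "(\<lambda>t. E (frac t)) \<in> smooth_loops N"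
  proof (rule smooth_loops_frac_comp[OF Es _ h(1)])
    show "E u \<in> N" for u using \<gamma>N \<epsilon>N by (simp add: E_def)
    show "E (u + 1) = E u" if "- h < u" "u < 0" for u
      using that h a \<beta>0 \<epsilon>1 by (simp add: E_def)
  qed
  moreover have "E (frac t) = (if t \<le> a then \<gamma> t else q)" if "t \<in> {2 * h..a} \<union> {a + 3 * h..1 - 2 * h}" for t
  proof -
    have "frac t = t" using that h a(2) by (auto simp: frac_eq)
    then show ?thesis using that h \<beta>id \<epsilon>q by (auto simp: E_def)
  qed
  ultimately show ?thesis using that by blast
qed

lemma integrable_real_bounded:
  fixes f g :: "'a \<Rightarrow> real"
  assumes "f \<in> borel_measurable M" "integrable M g"
    "\<And>x. x \<in> space M \<Longrightarrow> 0 \<le> f x" "\<And>x. x \<in> space M \<Longrightarrow> f x \<le> g x"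
  shows "integrable M f"
  using assms by (intro Bochner_Integration.integrable_bound[OF assms(2,1)] AE_I2) force

lemma quadratic_nonneg_imp_discriminant:
  fixes A B C :: real
  assumes "\<And>l. 0 \<le> A - 2 * l * C + l\<^sup>2 * B" "0 \<le> B"
  shows "C\<^sup>2 \<le> A * B"
proof (cases "B = 0")
  case True
  show ?thesis
  proof (rule ccontr)
    assume "\<not> ?thesis"
    then have "C \<noteq> 0" using True by simp
    have "0 \<le> A - 2 * ((A + 1) / (2 * C)) * C + ((A + 1) / (2 * C))\<^sup>2 * B" by (rule assms(1))
    also have "\<dots> = -1" using True \<open>C \<noteq> 0\<close> by (simp add: field_simps)
    finally show False by simp
  qed
next
  case False
  then have "B > 0" using assms(2) by simp
  have "0 \<le> A - 2 * (C / B) * C + (C / B)\<^sup>2 * B" by (rule assms(1))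
  also have "\<dots> = A - C\<^sup>2 / B" using \<open>B > 0\<close> by (simp add: power2_eq_square field_simps)
  finally show ?thesis using \<open>B > 0\<close> by (simp add: divide_le_eq mult.commute)
qed

lemma integral_mult_le_sqrt:
  fixes u v :: "'a \<Rightarrow> real"
  assumes "integrable M (\<lambda>x. (u x)\<^sup>2)" "integrable M (\<lambda>x. (v x)\<^sup>2)" "integrable M (\<lambda>x. u x * v x)"
  shows "integral\<^sup>L M (\<lambda>x. u x * v x) \<le> sqrt (integral\<^sup>L M (\<lambda>x. (u x)\<^sup>2)) * sqrt (integral\<^sup>L M (\<lambda>x. (v x)\<^sup>2))"
proof -
  define A B C where "A = integral\<^sup>L M (\<lambda>x. (u x)\<^sup>2)" and "B = integral\<^sup>L M (\<lambda>x. (v x)\<^sup>2)"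
    and "C = integral\<^sup>L M (\<lambda>x. u x * v x)"
  have "0 \<le> A - 2 * l * C + l\<^sup>2 * B" for l
  proof -
    have "0 \<le> integral\<^sup>L M (\<lambda>x. (u x - l * v x)\<^sup>2)" by simp
    also have "(\<lambda>x. (u x - l * v x)\<^sup>2) = (\<lambda>x. (u x)\<^sup>2 - (2 * l) * (u x * v x) + l\<^sup>2 * (v x)\<^sup>2)"
      by (simp add: power2_eq_square algebra_simps)
    also have "integral\<^sup>L M \<dots> = A - 2 * l * C + l\<^sup>2 * B"
      unfolding A_def B_def C_def using assms by simp
    finally show ?thesis .
  qed
  then have "C\<^sup>2 \<le> A * B" by (rule quadratic_nonneg_imp_discriminant) (simp add: B_def)
  then show ?thesis
    unfolding A_def B_def C_def by (simp add: real_le_rsqrt real_sqrt_mult[symmetric])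
qed

lemma borel_measurable_lebesgue_on_ident [measurable]:
  "(\<lambda>x. x) \<in> borel_measurable (lebesgue_on (S :: 'a::euclidean_space set))"
  by (intro measurable_restrict_space1 measurable_completion) simp

lemma small_interval_integral_less:
  fixes g :: "real \<Rightarrow> real"
  assumes S: "S \<in> sets lebesgue" and g: "integrable (lebesgue_on S) g" "\<And>t. 0 \<le> g t" and "e > 0"
  shows "\<exists>\<theta>>0. integral\<^sup>L (lebesgue_on S) (\<lambda>t. indicator {c - \<theta>..c + \<theta>} t * g t) < e"
proof -
  let ?M = "lebesgue_on S"
  define I where "I \<theta> t = indicator {c - \<theta>..c + \<theta>} t * g t" for \<theta> t
  have [measurable]: "g \<in> borel_measurable ?M" using g(1) by (rule borel_measurable_integrable)
  then have [measurable]: "I \<theta> \<in> borel_measurable ?M" for \<theta> unfolding I_def[abs_def] by measurable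
  have "AE t in ?M. t \<noteq> c"
    using AE_completion[OF AE_lborel_singleton[of c]] S by (subst AE_restrict_space_iff) auto
  then have "AE t in ?M. (\<lambda>n. I (1 / Suc n) t) \<longlonglongrightarrow> 0"
  proof (rule eventually_mono)
    fix t assume "t \<noteq> c"
    then obtain n0 where n0: "1 / real (Suc n0) < \<bar>t - c\<bar>"
      using reals_Archimedean[of "\<bar>t - c\<bar>"] by (auto simp: inverse_eq_divide)
    have "I (1 / Suc n) t = 0" if "n \<ge> n0" for n
    proof -
      have "1 / real (Suc n) \<le> 1 / real (Suc n0)" using that by (simp add: frac_le)
      then show ?thesis using n0 by (auto simp: I_def indicator_def abs_le_iff)
    qed
    then show "(\<lambda>n. I (1 / Suc n) t) \<longlonglongrightarrow> 0"
      by (intro tendsto_eventually) (auto simp: eventually_sequentially)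
  qed
  then have "(\<lambda>n. integral\<^sup>L ?M (I (1 / Suc n))) \<longlonglongrightarrow> integral\<^sup>L ?M (\<lambda>t. 0)"
    by (intro integral_dominated_convergence[where w = g])
      (use g in \<open>auto simp: I_def indicator_def intro!: AE_I2\<close>)
  then have "\<forall>\<^sub>F n in sequentially. integral\<^sup>L ?M (I (1 / Suc n)) < e"
    using \<open>e > 0\<close> by (intro order_tendstoD(2)) auto
  then obtain n where n: "integral\<^sup>L ?M (I (1 / Suc n)) < e"
    by (auto simp: eventually_sequentially)
  then show ?thesis unfolding I_def by (intro exI[of _ "1 / Suc n"]) auto
qed

lemma measure_lebesgue_on_Icc:
  assumes "S \<in> sets lebesgue" "{x..y} \<subseteq> S" "x \<le> y"
  shows "measure (lebesgue_on S) {x..y} = y - x"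
  using assms by (subst measure_restrict_space) auto

abbreviation lebesgue01 :: "real measure" where
  "lebesgue01 \<equiv> lebesgue_on {0..1}"

lemma power2_norm_diff_le: "(norm (x - y))\<^sup>2 \<le> 2 * (norm x)\<^sup>2 + 2 * (norm y)\<^sup>2"
proof -
  have "(norm (x - y))\<^sup>2 \<le> (norm x + norm y)\<^sup>2"
    by (simp add: power_mono norm_triangle_ineq4)
  also have "\<dots> \<le> 2 * (norm x)\<^sup>2 + 2 * (norm y)\<^sup>2"
    using sum_squares_bound[of "norm x" "norm y"] by (simp add: power2_eq_square algebra_simps)
  finally show ?thesis .
qed

lemma integrable_L2_dist:
  assumes "f \<in> L2_loops" "g \<in> L2_loops"
  shows "integrable lebesgue01 (\<lambda>t. (norm (f t - g t))\<^sup>2)"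
proof -
  have [measurable]: "f \<in> borel_measurable lebesgue01" "g \<in> borel_measurable lebesgue01"
    using assms by (simp_all add: L2_loops_def)
  have "integrable lebesgue01 (\<lambda>t. 2 * (norm (f t))\<^sup>2 + 2 * (norm (g t))\<^sup>2)"
    using assms by (simp add: L2_loops_def)
  then show ?thesis
    by (rule integrable_real_bounded[rotated]) (simp_all add: power2_norm_diff_le)
qed

lemma L2_dist_self [simp]: "L2_dist f f = 0"
  by (simp add: L2_dist_def)

lemma L2_dist_triangle:
  assumes f: "f \<in> L2_loops" and g: "g \<in> L2_loops" and h: "h \<in> L2_loops"
  shows "L2_dist f h \<le> L2_dist f g + L2_dist g h"
proof -
  define u where "u t = norm (f t - g t)" for t
  define v where "v t = norm (g t - h t)" for t
  have [measurable]: "f \<in> borel_measurable lebesgue01" "g \<in> borel_measurable lebesgue01"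
    "h \<in> borel_measurable lebesgue01"
    using f g h by (simp_all add: L2_loops_def)
  have [measurable]: "u \<in> borel_measurable lebesgue01" "v \<in> borel_measurable lebesgue01"
    unfolding u_def[abs_def] v_def[abs_def] by measurable
  have iu: "integrable lebesgue01 (\<lambda>t. (u t)\<^sup>2)" unfolding u_def using integrable_L2_dist[OF f g] .
  have iv: "integrable lebesgue01 (\<lambda>t. (v t)\<^sup>2)" unfolding v_def using integrable_L2_dist[OF g h] .
  have uv: "0 \<le> u t * v t" "u t * v t \<le> (u t)\<^sup>2 + (v t)\<^sup>2" for t
  proof -
    show "0 \<le> u t * v t" by (simp add: u_def v_def)
    then show "u t * v t \<le> (u t)\<^sup>2 + (v t)\<^sup>2" using sum_squares_bound[of "u t" "v t"] by linarith
  qed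
  have iuv: "integrable lebesgue01 (\<lambda>t. u t * v t)"
    by (rule integrable_real_bounded[OF _ Bochner_Integration.integrable_add[OF iu iv]]) (simp_all add: uv)
  define A B where "A = integral\<^sup>L lebesgue01 (\<lambda>t. (u t)\<^sup>2)" and "B = integral\<^sup>L lebesgue01 (\<lambda>t. (v t)\<^sup>2)"
  have "integral\<^sup>L lebesgue01 (\<lambda>t. (norm (f t - h t))\<^sup>2) \<le> integral\<^sup>L lebesgue01 (\<lambda>t. (u t)\<^sup>2 + 2 * (u t * v t) + (v t)\<^sup>2)"
  proof (rule integral_mono[OF integrable_L2_dist[OF f h]])
    show "integrable lebesgue01 (\<lambda>t. (u t)\<^sup>2 + 2 * (u t * v t) + (v t)\<^sup>2)" using iu iv iuv by simp
    fix t
    have "norm (f t - h t) \<le> u t + v t"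
      unfolding u_def v_def using norm_triangle_ineq[of "f t - g t" "g t - h t"] by simp
    then have "(norm (f t - h t))\<^sup>2 \<le> (u t + v t)\<^sup>2" by (rule power_mono) simp
    then show "(norm (f t - h t))\<^sup>2 \<le> (u t)\<^sup>2 + 2 * (u t * v t) + (v t)\<^sup>2"
      by (simp add: power2_sum algebra_simps)
  qed
  also have "\<dots> = A + 2 * integral\<^sup>L lebesgue01 (\<lambda>t. u t * v t) + B"
    unfolding A_def B_def using iu iv iuv by simp
  also have "\<dots> \<le> (sqrt A + sqrt B)\<^sup>2"
    using integral_mult_le_sqrt[OF iu iv iuv] by (simp add: A_def B_def power2_sum)
  finally show ?thesis
    unfolding L2_dist_def A_def B_def u_def v_def by (intro real_le_lsqrt) simp_all
qed

lemma smooth_loops_subset_L2_loops: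
  assumes "bounded N"
  shows "smooth_loops N \<subseteq> L2_loops"
proof
  fix \<gamma> assume \<gamma>: "\<gamma> \<in> smooth_loops N"
  obtain R where R: "\<And>x. x \<in> N \<Longrightarrow> norm x \<le> R" using assms bounded_iff by blast
  have "continuous_on {0..1} \<gamma>"
    using \<gamma> smooth_on_continuous_on continuous_on_subset
    unfolding smooth_loops_def by blast
  then have [measurable]: "\<gamma> \<in> borel_measurable lebesgue01"
    by (rule continuous_imp_measurable_on_sets_lebesgue) simp
  have "(norm (\<gamma> t))\<^sup>2 \<le> R\<^sup>2" for t
    using R[of "\<gamma> t"] \<gamma> by (intro power_mono) (auto simp: smooth_loops_def)
  then have "integrable lebesgue01 (\<lambda>t. (norm (\<gamma> t))\<^sup>2)"
    by (intro integrable_real_bounded[OF _ Lebesgue_Measure.integrable_const_ivl[of 0 1 "R\<^sup>2"]]) auto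
  then show "\<gamma> \<in> L2_loops" by (simp add: L2_loops_def)
qed

lemma L2_dist_sq_le_measure:
  fixes f g :: "real \<Rightarrow> 'a::euclidean_space"
  assumes [measurable]: "f \<in> borel_measurable lebesgue01" "g \<in> borel_measurable lebesgue01"
    and B: "B \<in> sets lebesgue01" and R: "\<And>t. norm (f t) \<le> R" "\<And>t. norm (g t) \<le> R"
    and eq: "\<And>t. t \<in> {0..1} \<Longrightarrow> t \<notin> B \<Longrightarrow> f t = g t"
  shows "(L2_dist f g)\<^sup>2 \<le> 4 * R\<^sup>2 * measure lebesgue01 B"
proof -
  have [measurable]: "B \<in> sets lebesgue01" by (rule B)
  have bound: "(norm (f t - g t))\<^sup>2 \<le> 4 * R\<^sup>2 * indicator B t" if "t \<in> {0..1}" for t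
  proof (cases "t \<in> B")
    case True
    have "norm (f t - g t) \<le> 2 * R" using norm_triangle_ineq4[of "f t" "g t"] R[of t] by simp
    then have "(norm (f t - g t))\<^sup>2 \<le> (2 * R)\<^sup>2" by (rule power_mono) simp
    then show ?thesis using True by simp
  qed (use that eq in simp)
  have int: "integrable lebesgue01 (\<lambda>t. 4 * R\<^sup>2 * indicator B t)"
    by (rule integrable_real_bounded[OF _ Lebesgue_Measure.integrable_const_ivl[of 0 1 "4 * R\<^sup>2"]])
      (auto simp: indicator_def)
  have "integral\<^sup>L lebesgue01 (\<lambda>t. (norm (f t - g t))\<^sup>2) \<le> integral\<^sup>L lebesgue01 (\<lambda>t. 4 * R\<^sup>2 * indicator B t)"
    by (intro integral_mono integrable_real_bounded[OF _ int] int) (simp_all add: bound)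
  also have "\<dots> = 4 * R\<^sup>2 * measure lebesgue01 B"
    using sets.sets_into_space[OF B] by (simp add: Int_absorb2)
  finally show ?thesis by (simp add: L2_dist_def)
qed

section \<open>Truncation of loops\<close>

text \<open>The clauses for \<open>s = 0\<close> and \<open>s = 1\<close> make the truncation equal to the loop itself,
  resp. to the constant \<open>0\<close>, as functions on all of \<open>\<real>\<close>.\<close>
definition truncate_loop :: "real \<Rightarrow> (real \<Rightarrow> 'a::zero) \<Rightarrow> real \<Rightarrow> 'a" where
  "truncate_loop s f t = (if s = 0 \<or> (s < 1 \<and> t \<le> 1 - s) then f t else 0)"

lemma truncate_loop_0 [simp]: "truncate_loop 0 f = f"
  by (simp add: truncate_loop_def fun_eq_iff)

lemma truncate_loop_1 [simp]: "truncate_loop 1 f = (\<lambda>t. 0)"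
  by (simp add: truncate_loop_def fun_eq_iff)

lemma borel_measurable_truncate_loop [measurable]:
  fixes f :: "real \<Rightarrow> 'a::real_normed_vector"
  assumes [measurable]: "f \<in> borel_measurable lebesgue01"
  shows "truncate_loop s f \<in> borel_measurable lebesgue01"
proof -
  have "(\<lambda>t. (if s = 0 \<or> (s < 1 \<and> t \<le> 1 - s) then 1 else 0 :: real) *\<^sub>R f t) \<in> borel_measurable lebesgue01"
    by measurable
  then show ?thesis by (simp add: truncate_loop_def[abs_def] if_distrib cong: if_cong)
qed

lemma truncate_loop_L2_loops: "f \<in> L2_loops \<Longrightarrow> truncate_loop s f \<in> L2_loops"
  unfolding L2_loops_def
  by (auto intro: integrable_real_bounded simp: truncate_loop_def)

lemma L2_dist_truncate_loop_le:
  assumes "f \<in> L2_loops" "g \<in> L2_loops"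
  shows "L2_dist (truncate_loop s f) (truncate_loop s g) \<le> L2_dist f g"
  unfolding L2_dist_def
proof (intro real_sqrt_le_mono integral_mono integrable_L2_dist truncate_loop_L2_loops assms)
  show "(norm (truncate_loop s f t - truncate_loop s g t))\<^sup>2 \<le> (norm (f t - g t))\<^sup>2" for t
    by (simp add: truncate_loop_def)
qed

lemma truncated_smooth_loop_L2_close:
  fixes N :: "'a::euclidean_space set"
  assumes N: "smooth_submanifold N" "connected N" "0 \<in> N" and R: "\<And>x. x \<in> N \<Longrightarrow> norm x \<le> R"
    and \<gamma>: "\<gamma> \<in> smooth_loops N" and s: "0 < s" "s < 1" and h: "0 < h" "10 * h \<le> s" "4 * h \<le> 1 - s"
  obtains \<delta> where "\<delta> \<in> smooth_loops N" "(L2_dist (truncate_loop s \<gamma>) \<delta>)\<^sup>2 \<le> 28 * R\<^sup>2 * h"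
proof -
  define a where "a = 1 - s"
  obtain \<delta> where \<delta>: "\<delta> \<in> smooth_loops N"
    and \<delta>_eq: "\<And>t. t \<in> {2 * h..a} \<union> {a + 3 * h..1 - 2 * h} \<Longrightarrow> \<delta> t = (if t \<le> a then \<gamma> t else 0)"
    using truncated_smooth_loop[OF N \<gamma>, of a h] s h by (auto simp: a_def)
  have "bounded N" using R by (auto simp: bounded_iff)
  then have L2: "\<gamma> \<in> L2_loops" "\<delta> \<in> L2_loops" using \<gamma> \<delta> smooth_loops_subset_L2_loops by auto
  define B where "B = {0..2 * h} \<union> {a..a + 3 * h} \<union> {1 - 2 * h..1}"
  have Icc: "{x..y} \<in> sets lebesgue01" if "0 \<le> x" "y \<le> 1" for x y :: real
    using that by (subst sets_restrict_space_iff) auto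
  have B: "B \<in> sets lebesgue01" using h Icc by (simp add: B_def a_def)
  have "measure lebesgue01 B \<le> measure lebesgue01 {0..2 * h} + measure lebesgue01 {a..a + 3 * h}
      + measure lebesgue01 {1 - 2 * h..1}"
    unfolding B_def using h Icc by (intro order.trans[OF measure_Un_le] add_mono measure_Un_le) (auto simp: a_def)
  also have "\<dots> = 7 * h" using h by (simp add: measure_lebesgue_on_Icc a_def)
  finally have meas: "measure lebesgue01 B \<le> 7 * h" .
  have "(L2_dist (truncate_loop s \<gamma>) \<delta>)\<^sup>2 \<le> 4 * R\<^sup>2 * measure lebesgue01 B"
  proof (rule L2_dist_sq_le_measure[OF _ _ B])
    show "truncate_loop s \<gamma> \<in> borel_measurable lebesgue01" "\<delta> \<in> borel_measurable lebesgue01"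
      using L2 truncate_loop_L2_loops by (auto simp: L2_loops_def)
    show "norm (truncate_loop s \<gamma> t) \<le> R" "norm (\<delta> t) \<le> R" for t
      using R \<gamma> \<delta> N(3) by (auto simp: truncate_loop_def smooth_loops_def)
    show "truncate_loop s \<gamma> t = \<delta> t" if "t \<in> {0..1}" "t \<notin> B" for t
      using that s \<delta>_eq[of t] by (auto simp: B_def a_def truncate_loop_def)
  qed
  also have "\<dots> \<le> 4 * R\<^sup>2 * (7 * h)" by (rule mult_left_mono[OF meas]) simp
  finally show ?thesis using that \<delta> by simp
qed

lemma truncate_smooth_loop_approx:
  fixes N :: "'a::euclidean_space set"
  assumes N: "smooth_submanifold N" "connected N" "bounded N" "0 \<in> N"
    and \<gamma>: "\<gamma> \<in> smooth_loops N" and s: "0 < s" "s < 1" and e: "e > 0"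
  obtains \<delta> where "\<delta> \<in> smooth_loops N" "L2_dist (truncate_loop s \<gamma>) \<delta> < e"
proof -
  obtain R where R: "\<And>x. x \<in> N \<Longrightarrow> norm x \<le> R" using N(3) bounded_iff by blast
  have R1: "0 < R\<^sup>2 + 1" by (auto intro: add_nonneg_pos)
  define h where "h = min (min (s / 10) ((1 - s) / 4)) (e\<^sup>2 / (28 * (R\<^sup>2 + 1)))"
  have "0 < e\<^sup>2 / (28 * (R\<^sup>2 + 1))" using e R1 by simp
  moreover have "h \<le> s / 10" "h \<le> (1 - s) / 4" unfolding h_def by linarith+
  ultimately have h: "0 < h" "10 * h \<le> s" "4 * h \<le> 1 - s" using s by (auto simp: h_def)
  have "28 * R\<^sup>2 * h \<le> 28 * R\<^sup>2 * (e\<^sup>2 / (28 * (R\<^sup>2 + 1)))"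
    by (intro mult_left_mono) (auto simp: h_def)
  also have "\<dots> = e\<^sup>2 * (R\<^sup>2 / (R\<^sup>2 + 1))" using R1 by (simp add: field_simps)
  also have "\<dots> < e\<^sup>2 * 1"
    using R1 e by (intro mult_strict_left_mono) (simp_all add: divide_less_eq)
  finally have hR: "28 * R\<^sup>2 * h < e\<^sup>2" by simp
  obtain \<delta> where \<delta>: "\<delta> \<in> smooth_loops N" "(L2_dist (truncate_loop s \<gamma>) \<delta>)\<^sup>2 \<le> 28 * R\<^sup>2 * h"
    using truncated_smooth_loop_L2_close[OF N(1,2,4) R \<gamma> s h] by blast
  then have "(L2_dist (truncate_loop s \<gamma>) \<delta>)\<^sup>2 < e\<^sup>2" using hR by linarith
  then show ?thesis using that \<delta>(1) e by (simp add: L2_dist_def power2_less_imp_less)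
qed

lemma truncate_loop_L2_loops_in:
  fixes N :: "'a::euclidean_space set"
  assumes N: "smooth_submanifold N" "connected N" "bounded N" "0 \<in> N"
    and f: "f \<in> L2_loops_in N" and s: "0 \<le> s" "s \<le> 1"
  shows "truncate_loop s f \<in> L2_loops_in N"
proof -
  have fL: "f \<in> L2_loops" and f_approx: "\<And>e. e > 0 \<Longrightarrow> \<exists>\<gamma>\<in>smooth_loops N. L2_dist f \<gamma> < e"
    using f by (auto simp: L2_loops_in_def)
  have "\<exists>\<delta>\<in>smooth_loops N. L2_dist (truncate_loop s f) \<delta> < e" if e: "e > 0" for e
  proof -
    consider "s = 0" | "s = 1" | "0 < s" "s < 1" using s by linarith
    then show ?thesis
    proof cases
      case 1
      then show ?thesis using f_approx[OF e] by simp
    next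
      case 2
      have "(\<lambda>t. 0) \<in> smooth_loops N" using N(4) by (simp add: smooth_loops_def smooth_on_const)
      then show ?thesis using 2 e by (intro bexI[of _ "\<lambda>t. 0"]) simp_all
    next
      case 3
      obtain \<gamma> where \<gamma>: "\<gamma> \<in> smooth_loops N" "L2_dist f \<gamma> < e / 2" using f_approx[of "e / 2"] e by auto
      obtain \<delta> where \<delta>: "\<delta> \<in> smooth_loops N" "L2_dist (truncate_loop s \<gamma>) \<delta> < e / 2"
        using truncate_smooth_loop_approx[OF N \<gamma>(1) 3] e by (metis half_gt_zero)
      have \<gamma>L: "\<gamma> \<in> L2_loops" and \<delta>L: "\<delta> \<in> L2_loops"
        using \<gamma>(1) \<delta>(1) smooth_loops_subset_L2_loops[OF N(3)] by auto
      have "L2_dist (truncate_loop s f) \<delta> \<le> L2_dist (truncate_loop s f) (truncate_loop s \<gamma>) + L2_dist (truncate_loop s \<gamma>) \<delta>"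
        by (intro L2_dist_triangle truncate_loop_L2_loops fL \<gamma>L \<delta>L)
      also have "\<dots> < e"
        using L2_dist_truncate_loop_le[OF fL \<gamma>L, of s] \<gamma>(2) \<delta>(2) by linarith
      finally show ?thesis using \<delta>(1) by blast
    qed
  qed
  then show ?thesis using truncate_loop_L2_loops[OF fL] by (simp add: L2_loops_in_def)
qed

text \<open>Moving the cut point from \<open>1 - s\<^sub>0\<close> to \<open>1 - s\<close> only affects the interval between them.\<close>
lemma L2_dist_truncate_loop_sq_le:
  assumes f0: "f0 \<in> L2_loops" and f: "f \<in> L2_loops"
    and s0: "0 \<le> s0" "s0 \<le> 1" and s: "0 \<le> s" "s \<le> 1" and \<theta>: "\<bar>s - s0\<bar> < \<theta>"
  shows "(L2_dist (truncate_loop s0 f0) (truncate_loop s f))\<^sup>2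
    \<le> 2 * (L2_dist f0 f)\<^sup>2 + 2 * integral\<^sup>L lebesgue01 (\<lambda>t. indicator {1 - s0 - \<theta>..1 - s0 + \<theta>} t * (norm (f0 t))\<^sup>2)"
proof -
  let ?I = "\<lambda>t. indicator {1 - s0 - \<theta>..1 - s0 + \<theta>} t * (norm (f0 t))\<^sup>2"
  have [measurable]: "f0 \<in> borel_measurable lebesgue01" "f \<in> borel_measurable lebesgue01"
    using f0 f by (simp_all add: L2_loops_def)
  have i1: "integrable lebesgue01 (\<lambda>t. (norm (f0 t - f t))\<^sup>2)" by (rule integrable_L2_dist[OF f0 f])
  have i0: "integrable lebesgue01 (\<lambda>t. (norm (f0 t))\<^sup>2)" using f0 by (simp add: L2_loops_def)
  have [measurable]: "?I \<in> borel_measurable lebesgue01" by measurable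
  have i2: "integrable lebesgue01 ?I"
    by (rule integrable_real_bounded[OF _ i0]) (simp_all add: indicator_def)
  have "integral\<^sup>L lebesgue01 (\<lambda>t. (norm (truncate_loop s0 f0 t - truncate_loop s f t))\<^sup>2)
     \<le> integral\<^sup>L lebesgue01 (\<lambda>t. 2 * (norm (f0 t - f t))\<^sup>2 + 2 * ?I t)"
  proof (intro integral_mono integrable_L2_dist truncate_loop_L2_loops f0 f)
    show "integrable lebesgue01 (\<lambda>t. 2 * (norm (f0 t - f t))\<^sup>2 + 2 * ?I t)" using i1 i2 by simp
    fix t :: real assume t: "t \<in> space lebesgue01"
    have "(norm (f t))\<^sup>2 \<le> 2 * (norm (f0 t - f t))\<^sup>2 + 2 * (norm (f0 t))\<^sup>2"
      using power2_norm_diff_le[of "f t - f0 t" "- f0 t"] by (simp add: norm_minus_commute)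
    moreover have "t \<in> {1 - s0 - \<theta>..1 - s0 + \<theta>}"
      if "(s0 = 0 \<or> (s0 < 1 \<and> t \<le> 1 - s0)) \<noteq> (s = 0 \<or> (s < 1 \<and> t \<le> 1 - s))"
      using that t s0 s \<theta> by auto
    ultimately show "(norm (truncate_loop s0 f0 t - truncate_loop s f t))\<^sup>2 \<le> 2 * (norm (f0 t - f t))\<^sup>2 + 2 * ?I t"
      unfolding truncate_loop_def by (auto simp: indicator_def)
  qed
  also have "\<dots> = 2 * integral\<^sup>L lebesgue01 (\<lambda>t. (norm (f0 t - f t))\<^sup>2) + 2 * integral\<^sup>L lebesgue01 ?I"
    using i1 i2 by simp
  finally show ?thesis
    using integrable_L2_dist[OF f0 f] integrable_L2_dist[OF truncate_loop_L2_loops[OF f0] truncate_loop_L2_loops[OF f]]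
    by (simp add: L2_dist_def)
qed

lemma truncate_loop_continuity:
  fixes f0 :: "real \<Rightarrow> 'a::euclidean_space"
  assumes f0: "f0 \<in> L2_loops" and s0: "s0 \<in> {0..1}" and e: "e > 0"
  obtains \<theta> r where "\<theta> > 0" "r > 0"
    "\<And>s f. s \<in> {0..1} \<Longrightarrow> f \<in> L2_loops \<Longrightarrow> dist s s0 < \<theta> \<Longrightarrow> L2_dist f0 f < r \<Longrightarrow>
      L2_dist (truncate_loop s0 f0) (truncate_loop s f) < e"
proof -
  have "integrable lebesgue01 (\<lambda>t. (norm (f0 t))\<^sup>2)" using f0 by (simp add: L2_loops_def)
  then have "\<exists>\<theta>>0. integral\<^sup>L lebesgue01 (\<lambda>t. indicator {1 - s0 - \<theta>..1 - s0 + \<theta>} t * (norm (f0 t))\<^sup>2)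
      < e\<^sup>2 / 4"
    using e by (intro small_interval_integral_less) auto
  then obtain \<theta> where "\<theta> > 0" and \<theta>:
    "integral\<^sup>L lebesgue01 (\<lambda>t. indicator {1 - s0 - \<theta>..1 - s0 + \<theta>} t * (norm (f0 t))\<^sup>2) < e\<^sup>2 / 4"
    by blast
  have "L2_dist (truncate_loop s0 f0) (truncate_loop s f) < e"
    if s: "s \<in> {0..1}" and f: "f \<in> L2_loops" and "dist s s0 < \<theta>" and df: "L2_dist f0 f < e / 2" for s f
  proof -
    have s\<theta>: "\<bar>s - s0\<bar> < \<theta>" using that by (simp add: dist_real_def)
    have "(L2_dist (truncate_loop s0 f0) (truncate_loop s f))\<^sup>2 \<le> 2 * (L2_dist f0 f)\<^sup>2 + 2 * (e\<^sup>2 / 4)"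
      using L2_dist_truncate_loop_sq_le[OF f0 f _ _ _ _ s\<theta>] s s0 \<theta> by auto
    also have "\<dots> < e\<^sup>2"
      using power_strict_mono[OF df, of 2] by (simp add: L2_dist_def power_divide)
    finally show ?thesis using e by (simp add: L2_dist_def power2_less_imp_less)
  qed
  then show ?thesis using \<open>\<theta> > 0\<close> e by (intro that[of \<theta> "e / 2"]) auto
qed

lemma istopology_pmetric:
  fixes d :: "'a \<Rightarrow> 'a \<Rightarrow> real"
  shows "istopology (\<lambda>U. U \<subseteq> X \<and> (\<forall>x\<in>U. \<exists>e>0. \<forall>y\<in>X. d x y < e \<longrightarrow> y \<in> U))"
proof -
  have Int_open: "S \<inter> T \<subseteq> X \<and> (\<forall>x\<in>S \<inter> T. \<exists>e>0. \<forall>y\<in>X. d x y < e \<longrightarrow> y \<in> S \<inter> T)"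
    if S: "S \<subseteq> X \<and> (\<forall>x\<in>S. \<exists>e>0. \<forall>y\<in>X. d x y < e \<longrightarrow> y \<in> S)"
     and T: "T \<subseteq> X \<and> (\<forall>x\<in>T. \<exists>e>0. \<forall>y\<in>X. d x y < e \<longrightarrow> y \<in> T)" for S T
  proof (intro conjI ballI)
    show "S \<inter> T \<subseteq> X" using S by blast
    fix x assume x: "x \<in> S \<inter> T"
    obtain e1 where e1: "e1 > 0" "\<forall>y\<in>X. d x y < e1 \<longrightarrow> y \<in> S" using S x by blast
    obtain e2 where e2: "e2 > 0" "\<forall>y\<in>X. d x y < e2 \<longrightarrow> y \<in> T" using T x by blast
    show "\<exists>e>0. \<forall>y\<in>X. d x y < e \<longrightarrow> y \<in> S \<inter> T"
    proof (intro exI[of _ "min e1 e2"] conjI ballI impI)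
      show "0 < min e1 e2" using e1 e2 by simp
      fix y assume "y \<in> X" "d x y < min e1 e2"
      then show "y \<in> S \<inter> T" using e1 e2 by simp
    qed
  qed
  have Union_open: "\<Union>K \<subseteq> X \<and> (\<forall>x\<in>\<Union>K. \<exists>e>0. \<forall>y\<in>X. d x y < e \<longrightarrow> y \<in> \<Union>K)"
    if K: "\<forall>U\<in>K. U \<subseteq> X \<and> (\<forall>x\<in>U. \<exists>e>0. \<forall>y\<in>X. d x y < e \<longrightarrow> y \<in> U)" for K :: "'a set set"
  proof (intro conjI ballI)
    show "\<Union>K \<subseteq> X" using K by blast
    fix x assume "x \<in> \<Union>K"
    then obtain U where U: "U \<in> K" "x \<in> U" by blast
    then obtain e where "e > 0" "\<forall>y\<in>X. d x y < e \<longrightarrow> y \<in> U" using K by blast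
    then show "\<exists>e>0. \<forall>y\<in>X. d x y < e \<longrightarrow> y \<in> \<Union>K" using U by blast
  qed
  show ?thesis unfolding istopology_def using Int_open Union_open by blast
qed

lemma openin_pmetric_topology:
  "openin (pmetric_topology X d) U \<longleftrightarrow> U \<subseteq> X \<and> (\<forall>x\<in>U. \<exists>e>0. \<forall>y\<in>X. d x y < e \<longrightarrow> y \<in> U)"
  unfolding pmetric_topology_def topology_inverse'[OF istopology_pmetric] by (rule refl)

lemma topspace_pmetric_topology [simp]: "topspace (pmetric_topology X d) = X"
proof
  show "topspace (pmetric_topology X d) \<subseteq> X"
    unfolding topspace_def openin_pmetric_topology by blast
  have "openin (pmetric_topology X d) X" unfolding openin_pmetric_topology by (auto intro: exI[of _ 1])
  then show "X \<subseteq> topspace (pmetric_topology X d)" unfolding topspace_def by blast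
qed

lemma openin_pmetric_topology_ball:
  assumes "\<And>x y z. x \<in> X \<Longrightarrow> y \<in> X \<Longrightarrow> z \<in> X \<Longrightarrow> d x z \<le> d x y + d y z" "x0 \<in> X"
  shows "openin (pmetric_topology X d) {x \<in> X. d x0 x < r}"
  unfolding openin_pmetric_topology
proof (intro conjI ballI)
  fix x assume x: "x \<in> {x \<in> X. d x0 x < r}"
  have "d x0 y < r" if "y \<in> X" "d x y < r - d x0 x" for y
    using assms(1)[OF assms(2) _ that(1), of x] x that(2) by simp
  then show "\<exists>e>0. \<forall>y\<in>X. d x y < e \<longrightarrow> y \<in> {x \<in> X. d x0 x < r}"
    using x by (intro exI[of _ "r - d x0 x"]) auto
qed auto

lemma continuous_map_prod_pmetric_topology:
  fixes S :: "'a::metric_space set" and F :: "'a \<Rightarrow> 'b \<Rightarrow> 'c"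
  assumes triangle: "\<And>x y z. x \<in> X \<Longrightarrow> y \<in> X \<Longrightarrow> z \<in> X \<Longrightarrow> d x z \<le> d x y + d y z"
    and refl: "\<And>x. x \<in> X \<Longrightarrow> d x x = 0"
    and into: "\<And>s x. s \<in> S \<Longrightarrow> x \<in> X \<Longrightarrow> F s x \<in> Y"
    and cont: "\<And>s0 x0 e. s0 \<in> S \<Longrightarrow> x0 \<in> X \<Longrightarrow> e > 0 \<Longrightarrow>
      \<exists>\<theta>>0. \<exists>r>0. \<forall>s\<in>S. \<forall>x\<in>X. dist s s0 < \<theta> \<longrightarrow> d x0 x < r \<longrightarrow> d' (F s0 x0) (F s x) < e"
  shows "continuous_map (prod_topology (top_of_set S) (pmetric_topology X d))
    (pmetric_topology Y d') (\<lambda>(s, x). F s x)"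
  unfolding continuous_map_def topspace_prod_topology topspace_pmetric_topology
proof (intro conjI allI impI)
  show "(\<lambda>(s, x). F s x) \<in> topspace (top_of_set S) \<times> X \<rightarrow> Y" using into by auto
  fix U assume U: "openin (pmetric_topology Y d') U"
  show "openin (prod_topology (top_of_set S) (pmetric_topology X d))
    {p \<in> topspace (top_of_set S) \<times> X. (case p of (s, x) \<Rightarrow> F s x) \<in> U}"
    unfolding openin_prod_topology_alt
  proof (intro allI impI)
    fix s0 x0 assume "(s0, x0) \<in> {p \<in> topspace (top_of_set S) \<times> X. (case p of (s, x) \<Rightarrow> F s x) \<in> U}"
    then have s0: "s0 \<in> S" and x0: "x0 \<in> X" and "F s0 x0 \<in> U" by auto
    then obtain e where e: "e > 0" "\<And>y. y \<in> Y \<Longrightarrow> d' (F s0 x0) y < e \<Longrightarrow> y \<in> U"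
      using U unfolding openin_pmetric_topology by blast
    obtain \<theta> r where "\<theta> > 0" "r > 0"
      and \<theta>r: "\<And>s x. s \<in> S \<Longrightarrow> x \<in> X \<Longrightarrow> dist s s0 < \<theta> \<Longrightarrow> d x0 x < r \<Longrightarrow> d' (F s0 x0) (F s x) < e"
      using cont[OF s0 x0 e(1)] by blast
    show "\<exists>V W. openin (top_of_set S) V \<and> openin (pmetric_topology X d) W \<and> s0 \<in> V \<and> x0 \<in> W \<and>
      V \<times> W \<subseteq> {p \<in> topspace (top_of_set S) \<times> X. (case p of (s, x) \<Rightarrow> F s x) \<in> U}"
    proof (intro exI conjI)
      show "openin (top_of_set S) (S \<inter> ball s0 \<theta>)" by (simp add: openin_open_Int)
      show "openin (pmetric_topology X d) {x \<in> X. d x0 x < r}"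
        by (rule openin_pmetric_topology_ball[OF triangle x0])
      show "s0 \<in> S \<inter> ball s0 \<theta>" "x0 \<in> {x \<in> X. d x0 x < r}" using s0 x0 refl \<open>\<theta> > 0\<close> \<open>r > 0\<close> by auto
      show "(S \<inter> ball s0 \<theta>) \<times> {x \<in> X. d x0 x < r} \<subseteq>
        {p \<in> topspace (top_of_set S) \<times> X. (case p of (s, x) \<Rightarrow> F s x) \<in> U}"
        using \<theta>r into e(2) by (auto simp: dist_commute)
    qed
  qed
qed

lemma continuous_map_truncate_loop:
  fixes N :: "'a::euclidean_space set"
  assumes N: "smooth_submanifold N" "connected N" "bounded N" "0 \<in> N"
  shows "continuous_map (prod_topology (top_of_set {0..1}) (pmetric_topology (L2_loops_in N) L2_dist))
    (pmetric_topology (L2_loops_in N) L2_dist) (\<lambda>(s, f). truncate_loop s f)"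
proof -
  have sub: "L2_loops_in N \<subseteq> L2_loops" by (auto simp: L2_loops_in_def)
  show ?thesis
  proof (rule continuous_map_prod_pmetric_topology)
    show "L2_dist f h \<le> L2_dist f g + L2_dist g h"
      if "f \<in> L2_loops_in N" "g \<in> L2_loops_in N" "h \<in> L2_loops_in N" for f g h
      using that sub by (intro L2_dist_triangle) auto
    show "truncate_loop s f \<in> L2_loops_in N" if "s \<in> {0..1}" "f \<in> L2_loops_in N" for s f
      using that truncate_loop_L2_loops_in[OF N] by auto
    show "\<exists>\<theta>>0. \<exists>r>0. \<forall>s\<in>{0..1}. \<forall>f\<in>L2_loops_in N. dist s s0 < \<theta> \<longrightarrow> L2_dist f0 f < r \<longrightarrow>
      L2_dist (truncate_loop s0 f0) (truncate_loop s f) < e"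
      if s0: "s0 \<in> {0..1}" and f0: "f0 \<in> L2_loops_in N" and e: "e > 0"
      for s0 and f0 :: "real \<Rightarrow> 'a" and e :: real
    proof -
      have "f0 \<in> L2_loops" using f0 sub by blast
      obtain \<theta> r where "\<theta> > 0" "r > 0" and cont: "\<And>s f. s \<in> {0..1} \<Longrightarrow> f \<in> L2_loops \<Longrightarrow>
        dist s s0 < \<theta> \<Longrightarrow> L2_dist f0 f < r \<Longrightarrow> L2_dist (truncate_loop s0 f0) (truncate_loop s f) < e"
        using truncate_loop_continuity[OF \<open>f0 \<in> L2_loops\<close> s0 e] by blast
      show ?thesis
      proof (rule exI[of _ \<theta>], intro conjI exI[of _ r] ballI impI)
        show "L2_dist (truncate_loop s0 f0) (truncate_loop s f) < e"
          if "s \<in> {0..1}" "f \<in> L2_loops_in N" "dist s s0 < \<theta>" "L2_dist f0 f < r" for s f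
          using that sub by (intro cont) auto
      qed fact+
    qed
  qed (simp add: L2_dist_def)
qed

theorem theorem5:
  fixes N :: "(complex ^ 'n ^ 'n) set"
  assumes "smooth_submanifold N"
    and "compact N"
    and "connected N"
    and "0 \<in> N"
  shows "contractible_space (pmetric_topology (L2_loops_in N) L2_dist)"
proof -
  have "bounded N" using assms(2) by (rule compact_imp_bounded)
  then have "continuous_map (prod_topology (top_of_set {0..1}) (pmetric_topology (L2_loops_in N) L2_dist))
    (pmetric_topology (L2_loops_in N) L2_dist) (\<lambda>(s, f). truncate_loop s f)"
    using assms by (intro continuous_map_truncate_loop)
  then have "homotopic_with (\<lambda>x. True) (pmetric_topology (L2_loops_in N) L2_dist)
    (pmetric_topology (L2_loops_in N) L2_dist) id (\<lambda>x. (\<lambda>t. 0))"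
    unfolding homotopic_with_def by (intro exI[of _ "\<lambda>(s, f). truncate_loop s f"] conjI allI) simp_all
  then show ?thesis unfolding contractible_space_def by blast
qed

end
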